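(* Let $X$ be an infinite set with a metric $d$ inducing the discrete topology and having bounded geometry, equipped with the counting measure. Let $\xi$ be a filter on $X$ and $T\in\mathscr{E}(X)$. Then $$T\in\mathscr{G}_\xi(X)\iff\lim_{x\to\xi}\ \sup_{y,z\in B_x(r)}|\langle y,Tz\rangle|=0\ \text{for all } r>0.$$ Moreover, if $\xi$ is coarse, then $\mathscr{G}_\xi(X)=\{T\in\mathscr{E}(X):\lim_{x,y\to\xi}\langle x,Ty\rangle=0\}$.
   Context: Bounded geometry: for every $r>0$ the number of points of $B_x(r)=\{y:d(x,y)\le r\}$ is bounded by a constant independent of $x$. $L^2(X)=\ell^2(X)$ and each $x\in X$ is identified with the basis vector $\mathbf{1}_{\{x\}}$, so $\langle x,Ty\rangle$ is the matrix coefficient of $T$. $\mathbf{1}_A$ is multiplication by the characteristic function of $A$. A kernel $k$ on $X\times X$ is controlled if $k(x,y)=0$ whenever $d(x,y)>r$ for some $r$; $\mathscr{E}(X)$ is the norm closure of the operators $(Op(k)f)(x)=\sum_y k(x,y)f(y)$ with $k$ bounded, uniformly continuous and controlled. For a filter $\xi$, $\lim_{x\to\xi}f(x)=0$ means $\{x:|f(x)|<\varepsilon\}\in\xi$ for each $\varepsilon>0$, and $\lim_{x,y\to\xi}g(x,y)=0$ means that for each $\varepsilon>0$ there is $F\in\xi$ with $|g(x,y)|<\varepsilon$ for all $x,y\in F$. $\mathscr{G}_\xi(X)=\{T\in\mathscr{E}(X):\lim_{x\to\xi}\|\mathbf{1}_{B_x(r)}T\|=0\ \forall r>0\}$. With $F^{(r)}=\{x:\inf_{y\notin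 F}d(x,y)>r\}$, $\xi$ is coarse if $F\in\xi\Rightarrow F^{(r)}\in\xi$ for all $r>0$. *)

theory Defs
  imports "HOL-Analysis.Analysis"
begin

text \<open>The space X is the universe of the type 'a, with metric d; L2(X) = l2(X) for the counting measure.
Operators are maps on functions 'a => complex; only their action on l2 matters.\<close>

definition metric_on :: "('a \<Rightarrow> 'a \<Rightarrow> real) \<Rightarrow> bool" where
  "metric_on d \<longleftrightarrow> (\<forall>x y. d x y \<ge> 0) \<and> (\<forall>x y. d x y = 0 \<longleftrightarrow> x = y)
     \<and> (\<forall>x y. d x y = d y x) \<and> (\<forall>x y z. d x z \<le> d x y + d y z)"

definition discrete_metric :: "('a \<Rightarrow> 'a \<Rightarrow> real) \<Rightarrow> bool" where
  "discrete_metric d \<longleftrightarrow> (\<forall>x. \<exists>e>0. \<forall>y. d x y < e \<longrightarrow> y = x)"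

definition cball_d :: "('a \<Rightarrow> 'a \<Rightarrow> real) \<Rightarrow> 'a \<Rightarrow> real \<Rightarrow> 'a set" where
  "cball_d d x r = {y. d x y \<le> r}"

definition bounded_geometry :: "('a \<Rightarrow> 'a \<Rightarrow> real) \<Rightarrow> bool" where
  "bounded_geometry d \<longleftrightarrow> (\<forall>r>0. \<exists>N::nat. \<forall>x. finite (cball_d d x r) \<and> card (cball_d d x r) \<le> N)"

definition ell2 :: "('a \<Rightarrow> complex) set" where
  "ell2 = {f. (\<lambda>x. (cmod (f x))\<^sup>2) summable_on UNIV}"

definition norm2 :: "('a \<Rightarrow> complex) \<Rightarrow> real" where
  "norm2 f = sqrt (\<Sum>\<^sub>\<infinity>x. (cmod (f x))\<^sup>2)"

definition bounded_op :: "(('a \<Rightarrow> complex) \<Rightarrow> ('a \<Rightarrow> complex)) \<Rightarrow> bool" where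
  "bounded_op T \<longleftrightarrow> (\<forall>f\<in>ell2. T f \<in> ell2)
     \<and> (\<forall>f\<in>ell2. \<forall>g\<in>ell2. T (\<lambda>x. f x + g x) = (\<lambda>x. T f x + T g x))
     \<and> (\<forall>f\<in>ell2. \<forall>c::complex. T (\<lambda>x. c * f x) = (\<lambda>x. c * T f x))
     \<and> (\<exists>C. \<forall>f\<in>ell2. norm2 (T f) \<le> C * norm2 f)"

definition opnorm :: "(('a \<Rightarrow> complex) \<Rightarrow> ('a \<Rightarrow> complex)) \<Rightarrow> real" where
  "opnorm T = Sup {norm2 (T f) | f. f \<in> ell2 \<and> norm2 f \<le> 1}"

definition mult_op :: "'a set \<Rightarrow> (('a \<Rightarrow> complex) \<Rightarrow> ('a \<Rightarrow> complex)) \<Rightarrow> (('a \<Rightarrow> complex) \<Rightarrow> ('a \<Rightarrow> complex))" where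
  "mult_op A T = (\<lambda>f x. indicator A x * T f x)"

definition coeff :: "(('a \<Rightarrow> complex) \<Rightarrow> ('a \<Rightarrow> complex)) \<Rightarrow> 'a \<Rightarrow> 'a \<Rightarrow> complex" where
  "coeff T x y = T (indicator {y}) x"

definition Op :: "('a \<Rightarrow> 'a \<Rightarrow> complex) \<Rightarrow> ('a \<Rightarrow> complex) \<Rightarrow> ('a \<Rightarrow> complex)" where
  "Op k f = (\<lambda>x. \<Sum>\<^sub>\<infinity>y. k x y * f y)"

definition bounded_kernel :: "('a \<Rightarrow> 'a \<Rightarrow> complex) \<Rightarrow> bool" where
  "bounded_kernel k \<longleftrightarrow> (\<exists>C. \<forall>x y. cmod (k x y) \<le> C)"

definition unif_cont_kernel :: "('a \<Rightarrow> 'a \<Rightarrow> real) \<Rightarrow> ('a \<Rightarrow> 'a \<Rightarrow> complex) \<Rightarrow> bool" where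
  "unif_cont_kernel d k \<longleftrightarrow> (\<forall>e>0. \<exists>\<delta>>0. \<forall>x y x' y'.
      d x x' < \<delta> \<longrightarrow> d y y' < \<delta> \<longrightarrow> cmod (k x y - k x' y') < e)"

definition controlled_kernel :: "('a \<Rightarrow> 'a \<Rightarrow> real) \<Rightarrow> ('a \<Rightarrow> 'a \<Rightarrow> complex) \<Rightarrow> bool" where
  "controlled_kernel d k \<longleftrightarrow> (\<exists>r. \<forall>x y. d x y > r \<longrightarrow> k x y = 0)"

definition E_alg :: "('a \<Rightarrow> 'a \<Rightarrow> real) \<Rightarrow> (('a \<Rightarrow> complex) \<Rightarrow> ('a \<Rightarrow> complex)) set" where
  "E_alg d = {T. bounded_op T \<and> (\<forall>e>0. \<exists>k. bounded_kernel k \<and> unif_cont_kernel d k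
      \<and> controlled_kernel d k \<and> opnorm (\<lambda>f x. T f x - Op k f x) < e)}"

definition G_alg :: "('a \<Rightarrow> 'a \<Rightarrow> real) \<Rightarrow> 'a filter \<Rightarrow> (('a \<Rightarrow> complex) \<Rightarrow> ('a \<Rightarrow> complex)) set" where
  "G_alg d \<xi> = {T \<in> E_alg d. \<forall>r>0. ((\<lambda>x. opnorm (mult_op (cball_d d x r) T)) \<longlongrightarrow> 0) \<xi>}"

definition lim2_zero :: "'a filter \<Rightarrow> ('a \<Rightarrow> 'a \<Rightarrow> complex) \<Rightarrow> bool" where
  "lim2_zero \<xi> g \<longleftrightarrow> (\<forall>e>0. \<exists>F. eventually (\<lambda>x. x \<in> F) \<xi> \<and> (\<forall>x\<in>F. \<forall>y\<in>F. cmod (g x y) < e))"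

text \<open>F^(r) = {x. inf_{y notin F} d(x,y) > r}, with inf of the empty set = +infinity.\<close>
definition interior_r :: "('a \<Rightarrow> 'a \<Rightarrow> real) \<Rightarrow> 'a set \<Rightarrow> real \<Rightarrow> 'a set" where
  "interior_r d F r = {x. \<exists>s>r. \<forall>y. y \<notin> F \<longrightarrow> d x y \<ge> s}"

definition coarse_filter :: "('a \<Rightarrow> 'a \<Rightarrow> real) \<Rightarrow> 'a filter \<Rightarrow> bool" where
  "coarse_filter d \<xi> \<longleftrightarrow> (\<forall>F. eventually (\<lambda>x. x \<in> F) \<xi> \<longrightarrow>
      (\<forall>r>0. eventually (\<lambda>x. x \<in> interior_r d F r) \<xi>))"

end

theory Submission
  imports Defs
begin

text \<open>The coefficient \<langle>y, T z\<rangle> is the value at y of 1_B T applied to the unit vector at z, so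
  for y, z in B = B_x(r) it is bounded by \<parallel>1_B T\<parallel>. Conversely, approximate T within \<epsilon> by Op k
  with k vanishing for d > r0. For x in B_x0(r), split f into its part on B_x(r0) and the rest:
  the first part contributes at most |B_x(r0)| times the largest coefficient of T on B_x0(r + r0);
  at x, Op k does not see the rest, so T acts on it like T - Op k, contributing at most \<epsilon>.
  Bounded geometry turns these pointwise estimates into a bound on \<parallel>1_B T\<parallel>.
  For the second statement, the same approximation makes all coefficients with d(x,y) > r0 smaller
  than \<epsilon>, while those with d(x,y) \<le> r0 are coefficients on a ball; coarseness of \<xi> is what
  provides, for a set F \<in> \<xi> on which coefficients are small, eventually balls B_x(r) \<subseteq> F.\<close>

section \<open>Square-summable functions\<close>

lemma ell2_if_finite_sums_le:
  fixes g :: "'a \<Rightarrow> complex"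
  assumes "\<And>F. finite F \<Longrightarrow> (\<Sum>x\<in>F. (cmod (g x))\<^sup>2) \<le> B"
  shows "g \<in> ell2" and "norm2 g \<le> sqrt B"
proof -
  have summable: "(\<lambda>x. (cmod (g x))\<^sup>2) summable_on UNIV"
    by (rule nonneg_bdd_above_summable_on) (auto intro!: bdd_aboveI[where M=B] assms)
  then show "g \<in> ell2" by (simp add: ell2_def)
  have "(\<Sum>\<^sub>\<infinity>x. (cmod (g x))\<^sup>2) \<le> B"
    by (rule infsum_le_finite_sums[OF summable]) (use assms in auto)
  then show "norm2 g \<le> sqrt B" by (simp add: norm2_def)
qed

lemma norm2_nonneg: "0 \<le> norm2 g"
  by (simp add: norm2_def infsum_nonneg)

lemma sum_norm_sq_le_norm2_sq:
  fixes g :: "'a \<Rightarrow> complex"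
  assumes "g \<in> ell2" and "finite A"
  shows "(\<Sum>x\<in>A. (cmod (g x))\<^sup>2) \<le> (norm2 g)\<^sup>2"
proof -
  have "(\<lambda>x. (cmod (g x))\<^sup>2) summable_on UNIV" using assms(1) by (simp add: ell2_def)
  then have "(\<Sum>x\<in>A. (cmod (g x))\<^sup>2) \<le> (\<Sum>\<^sub>\<infinity>x. (cmod (g x))\<^sup>2)"
    by (rule finite_sum_le_infsum) (use assms(2) in auto)
  then show ?thesis by (simp add: norm2_def infsum_nonneg)
qed

lemma norm_le_norm2:
  fixes g :: "'a \<Rightarrow> complex"
  assumes "g \<in> ell2"
  shows "cmod (g x) \<le> norm2 g"
  using sum_norm_sq_le_norm2_sq[OF assms, of "{x}"] norm2_nonneg[of g]
  by (simp add: power2_le_iff_abs_le)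

lemma ell2_finite_support:
  fixes g :: "'a \<Rightarrow> complex"
  assumes "finite A" and "\<And>x. x \<notin> A \<Longrightarrow> g x = 0"
  shows "g \<in> ell2" and "norm2 g = sqrt (\<Sum>x\<in>A. (cmod (g x))\<^sup>2)"
proof -
  have "(\<Sum>x\<in>F. (cmod (g x))\<^sup>2) \<le> (\<Sum>x\<in>A. (cmod (g x))\<^sup>2)" if "finite F" for F
  proof -
    have "(\<Sum>x\<in>F. (cmod (g x))\<^sup>2) = (\<Sum>x\<in>F \<inter> A. (cmod (g x))\<^sup>2)"
      by (rule sum.mono_neutral_right) (use that assms in auto)
    also have "\<dots> \<le> (\<Sum>x\<in>A. (cmod (g x))\<^sup>2)"
      by (rule sum_mono2) (use assms in auto)
    finally show ?thesis .
  qed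
  then show "g \<in> ell2" by (rule ell2_if_finite_sums_le)
  have "(\<Sum>\<^sub>\<infinity>x. (cmod (g x))\<^sup>2) = (\<Sum>\<^sub>\<infinity>x\<in>A. (cmod (g x))\<^sup>2)"
    by (rule infsum_cong_neutral) (use assms in auto)
  then show "norm2 g = sqrt (\<Sum>x\<in>A. (cmod (g x))\<^sup>2)"
    using assms(1) by (simp add: norm2_def)
qed

lemma ell2_indicator_singleton: "(indicator {y} :: 'a \<Rightarrow> complex) \<in> ell2"
  and norm2_indicator_singleton: "norm2 (indicator {y} :: 'a \<Rightarrow> complex) = 1"
  using ell2_finite_support[of "{y}" "indicator {y} :: 'a \<Rightarrow> complex"] by auto

lemma ell2_zero: "(\<lambda>x. 0 :: complex) \<in> ell2"
  and norm2_zero: "norm2 (\<lambda>x. 0 :: complex) = 0"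
  using ell2_finite_support[of "{}" "\<lambda>x. 0 :: complex"] by auto

lemma ell2_indicator_mult:
  fixes g :: "'a \<Rightarrow> complex"
  assumes "g \<in> ell2"
  shows "(\<lambda>x. indicator A x * g x) \<in> ell2" and "norm2 (\<lambda>x. indicator A x * g x) \<le> norm2 g"
proof -
  have "(\<Sum>x\<in>F. (cmod (indicator A x * g x))\<^sup>2) \<le> (norm2 g)\<^sup>2" if "finite F" for F
  proof -
    have "(\<Sum>x\<in>F. (cmod (indicator A x * g x))\<^sup>2) \<le> (\<Sum>x\<in>F. (cmod (g x))\<^sup>2)"
      by (rule sum_mono) (auto simp: indicator_def)
    then show ?thesis using sum_norm_sq_le_norm2_sq[OF assms that] by linarith
  qed
  from ell2_if_finite_sums_le[OF this]
  show "(\<lambda>x. indicator A x * g x) \<in> ell2" and "norm2 (\<lambda>x. indicator A x * g x) \<le> norm2 g"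
    using norm2_nonneg[of g] by auto
qed

text \<open>A crude form of the triangle inequality suffices here.\<close>

lemma ell2_diff:
  fixes g h :: "'a \<Rightarrow> complex"
  assumes g: "g \<in> ell2" and h: "h \<in> ell2"
  shows "(\<lambda>x. g x - h x) \<in> ell2" and "norm2 (\<lambda>x. g x - h x) \<le> sqrt 2 * (norm2 g + norm2 h)"
proof -
  have "(\<Sum>x\<in>F. (cmod (g x - h x))\<^sup>2) \<le> 2 * (norm2 g + norm2 h)\<^sup>2" if F: "finite F" for F
  proof -
    have "(cmod (g x - h x))\<^sup>2 \<le> 2 * (cmod (g x))\<^sup>2 + 2 * (cmod (h x))\<^sup>2" for x
    proof -
      have "(cmod (g x - h x))\<^sup>2 \<le> (cmod (g x) + cmod (h x))\<^sup>2"
        by (simp add: power_mono norm_triangle_ineq4)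
      then show ?thesis
        using sum_squares_bound[of "cmod (g x)" "cmod (h x)"] by (simp add: power2_sum)
    qed
    then have "(\<Sum>x\<in>F. (cmod (g x - h x))\<^sup>2)
        \<le> 2 * (\<Sum>x\<in>F. (cmod (g x))\<^sup>2) + 2 * (\<Sum>x\<in>F. (cmod (h x))\<^sup>2)"
      by (simp add: sum_mono sum.distrib[symmetric] sum_distrib_left)
    also have "\<dots> \<le> 2 * (norm2 g)\<^sup>2 + 2 * (norm2 h)\<^sup>2"
      using sum_norm_sq_le_norm2_sq[OF g F] sum_norm_sq_le_norm2_sq[OF h F] by linarith
    also have "\<dots> \<le> 2 * (norm2 g + norm2 h)\<^sup>2"
      using norm2_nonneg[of g] norm2_nonneg[of h] by (simp add: power2_sum)
    finally show ?thesis .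
  qed
  note bound = ell2_if_finite_sums_le[OF this]
  then show "(\<lambda>x. g x - h x) \<in> ell2" by blast
  have "sqrt (2 * (norm2 g + norm2 h)\<^sup>2) = sqrt 2 * (norm2 g + norm2 h)"
    using norm2_nonneg[of g] norm2_nonneg[of h] by (simp add: real_sqrt_mult)
  then show "norm2 (\<lambda>x. g x - h x) \<le> sqrt 2 * (norm2 g + norm2 h)"
    using bound(2) by simp
qed

section \<open>Bounded operators and the operator norm\<close>

text \<open>opnorm is a supremum and says nothing unless the image of the unit ball is bounded above.
  ell2_bounded asks for just that, without the linearity required by bounded_op, so that it is
  easy to establish for T - Op k.\<close>

definition ell2_bounded :: "(('a \<Rightarrow> complex) \<Rightarrow> ('a \<Rightarrow> complex)) \<Rightarrow> bool" where
  "ell2_bounded S \<longleftrightarrow> (\<exists>C. \<forall>f\<in>ell2. S f \<in> ell2 \<and> norm2 (S f) \<le> C * norm2 f)"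

lemma ell2_boundedI:
  assumes "\<And>f. f \<in> ell2 \<Longrightarrow> S f \<in> ell2 \<and> norm2 (S f) \<le> C * norm2 f"
  shows "ell2_bounded S"
  using assms unfolding ell2_bounded_def by blast

lemma bounded_op_imp_ell2_bounded: "bounded_op T \<Longrightarrow> ell2_bounded T"
  unfolding bounded_op_def ell2_bounded_def by blast

lemma ell2_bounded_mult_op:
  assumes "ell2_bounded T"
  shows "ell2_bounded (mult_op A T)"
proof -
  obtain C where "\<And>f. f \<in> ell2 \<Longrightarrow> T f \<in> ell2" and "\<And>f. f \<in> ell2 \<Longrightarrow> norm2 (T f) \<le> C * norm2 f"
    using assms unfolding ell2_bounded_def by blast
  then have "mult_op A T f \<in> ell2 \<and> norm2 (mult_op A T f) \<le> C * norm2 f" if "f \<in> ell2" for f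
    unfolding mult_op_def using ell2_indicator_mult[of "T f" A] that by (meson order_trans)
  then show ?thesis by (rule ell2_boundedI)
qed

lemma ell2_bounded_diff:
  assumes "ell2_bounded S" and "ell2_bounded R"
  shows "ell2_bounded (\<lambda>f x. S f x - R f x)"
proof -
  obtain C where S: "\<And>f. f \<in> ell2 \<Longrightarrow> S f \<in> ell2" "\<And>f. f \<in> ell2 \<Longrightarrow> norm2 (S f) \<le> C * norm2 f"
    using assms(1) unfolding ell2_bounded_def by blast
  obtain D where R: "\<And>f. f \<in> ell2 \<Longrightarrow> R f \<in> ell2" "\<And>f. f \<in> ell2 \<Longrightarrow> norm2 (R f) \<le> D * norm2 f"
    using assms(2) unfolding ell2_bounded_def by blast
  show ?thesis
  proof (rule ell2_boundedI[where C="sqrt 2 * (C + D)"])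
    fix f :: "'a \<Rightarrow> complex" assume f: "f \<in> ell2"
    have "norm2 (\<lambda>x. S f x - R f x) \<le> sqrt 2 * (norm2 (S f) + norm2 (R f))"
      by (rule ell2_diff(2)[OF S(1)[OF f] R(1)[OF f]])
    also have "\<dots> \<le> sqrt 2 * ((C + D) * norm2 f)"
      using S(2)[OF f] R(2)[OF f] by (intro mult_left_mono) (auto simp: distrib_right)
    finally show "(\<lambda>x. S f x - R f x) \<in> ell2 \<and> norm2 (\<lambda>x. S f x - R f x) \<le> sqrt 2 * (C + D) * norm2 f"
      using ell2_diff(1)[OF S(1)[OF f] R(1)[OF f]] by (simp add: mult.assoc)
  qed
qed

lemma norm2_le_opnorm:
  assumes "ell2_bounded S" and "f \<in> ell2" and "norm2 f \<le> 1"
  shows "norm2 (S f) \<le> opnorm S"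
proof -
  obtain C where C: "\<And>f. f \<in> ell2 \<Longrightarrow> norm2 (S f) \<le> C * norm2 f"
    using assms(1) unfolding ell2_bounded_def by blast
  have "bdd_above {norm2 (S f) | f. f \<in> ell2 \<and> norm2 f \<le> 1}"
  proof (rule bdd_aboveI[where M="max C 0"], safe)
    fix f :: "'a \<Rightarrow> complex" assume "f \<in> ell2" "norm2 f \<le> 1"
    moreover have "C * norm2 f \<le> max C 0" if "norm2 f \<le> 1"
    proof -
      have "C * norm2 f \<le> max C 0 * norm2 f" using norm2_nonneg[of f] by (simp add: mult_right_mono)
      also have "\<dots> \<le> max C 0" using that norm2_nonneg[of f] by (simp add: mult_left_le)
      finally show ?thesis .
    qed
    ultimately show "norm2 (S f) \<le> max C 0" using C by (meson order_trans)
  qed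
  then show ?thesis
    unfolding opnorm_def using assms(2,3) by (intro cSup_upper) auto
qed

lemma norm_le_opnorm:
  assumes "ell2_bounded S" and "f \<in> ell2" and "norm2 f \<le> 1"
  shows "cmod (S f x) \<le> opnorm S"
proof -
  have "S f \<in> ell2" using assms(1,2) unfolding ell2_bounded_def by blast
  then show ?thesis using norm_le_norm2[of "S f" x] norm2_le_opnorm[OF assms] by linarith
qed

lemma opnorm_nonneg:
  assumes "ell2_bounded S"
  shows "0 \<le> opnorm S"
proof -
  have "norm2 (S (\<lambda>x. 0)) \<le> opnorm S"
    by (rule norm2_le_opnorm[OF assms ell2_zero]) (simp add: norm2_zero)
  then show ?thesis using norm2_nonneg order_trans by blast
qed

lemma opnorm_le:
  assumes "\<And>f. f \<in> ell2 \<Longrightarrow> norm2 f \<le> 1 \<Longrightarrow> norm2 (S f) \<le> c"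
  shows "opnorm S \<le> c"
proof -
  have "(\<lambda>x::'a. 0::complex) \<in> ell2 \<and> norm2 (\<lambda>x::'a. 0::complex) \<le> 1"
    by (simp add: ell2_zero norm2_zero)
  then have "norm2 (S (\<lambda>x. 0)) \<in> {norm2 (S f) | f. f \<in> ell2 \<and> norm2 f \<le> 1}"
    by blast
  then show ?thesis unfolding opnorm_def using assms by (intro cSup_least) auto
qed

lemma bounded_op_add:
  assumes "bounded_op T" and "f \<in> ell2" and "g \<in> ell2"
  shows "T (\<lambda>x. f x + g x) = (\<lambda>x. T f x + T g x)"
  using assms unfolding bounded_op_def by blast

lemma bounded_op_scale:
  assumes "bounded_op T" and "f \<in> ell2"
  shows "T (\<lambda>x. c * f x) = (\<lambda>x. c * T f x)"
  using assms unfolding bounded_op_def by blast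

lemma bounded_op_zero:
  assumes "bounded_op T"
  shows "T (\<lambda>z. 0) = (\<lambda>x. 0)"
  using bounded_op_scale[OF assms ell2_zero, of 0] by simp

lemma sum_mult_indicator_singleton:
  assumes "finite B"
  shows "(\<Sum>y\<in>B. f y * indicator {y} z) = (if z \<in> B then f z else (0::'b::comm_ring_1))"
proof -
  have "(\<Sum>y\<in>B. f y * indicator {y} z) = (\<Sum>y\<in>B. if y = z then f y else 0)"
    by (rule sum.cong) (auto simp: indicator_def)
  then show ?thesis using assms by (simp add: sum.delta')
qed

lemma bounded_op_sum_indicator:
  assumes T: "bounded_op T" and "finite B"
  shows "T (\<lambda>z. \<Sum>y\<in>B. f y * indicator {y} z) = (\<lambda>x. \<Sum>y\<in>B. f y * coeff T x y)"
  using \<open>finite B\<close>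
proof (induction B rule: finite_induct)
  case empty
  then show ?case using bounded_op_zero[OF T] by simp
next
  case (insert a B)
  have single: "(\<lambda>z. f a * indicator {a} z) \<in> ell2"
    by (rule ell2_finite_support[of "{a}"]) auto
  have rest: "(\<lambda>z. \<Sum>y\<in>B. f y * indicator {y} z) \<in> ell2"
    by (rule ell2_finite_support[OF insert(1)]) (simp add: sum_mult_indicator_singleton[OF insert(1)])
  have add: "T (\<lambda>z. f a * indicator {a} z + (\<Sum>y\<in>B. f y * indicator {y} z))
      = (\<lambda>x. T (\<lambda>z. f a * indicator {a} z) x + T (\<lambda>z. \<Sum>y\<in>B. f y * indicator {y} z) x)"
    by (rule bounded_op_add[OF T single rest])
  have scale: "T (\<lambda>z. f a * indicator {a} z) = (\<lambda>x. f a * coeff T x a)"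
    using bounded_op_scale[OF T ell2_indicator_singleton[of a], of "f a"]
    by (simp add: coeff_def indicator_def)
  have split: "(\<lambda>z. \<Sum>y\<in>insert a B. f y * indicator {y} z)
      = (\<lambda>z. f a * indicator {a} z + (\<Sum>y\<in>B. f y * indicator {y} z))"
    by (rule ext) (simp only: sum.insert[OF insert(1,2)])
  show ?case
    unfolding split add scale insert.IH using insert(1,2) by simp
qed

section \<open>Kernel operators\<close>

lemma Op_eq_finite_sum:
  assumes "finite B" and "\<And>y. y \<notin> B \<Longrightarrow> k x y * f y = 0"
  shows "Op k f x = (\<Sum>y\<in>B. k x y * f y)"
proof -
  have "Op k f x = (\<Sum>\<^sub>\<infinity>y\<in>B. k x y * f y)"
    unfolding Op_def by (rule infsum_cong_neutral) (use assms in auto)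
  then show ?thesis using assms(1) by simp
qed

text \<open>Double counting: by symmetry of d, each y lies in at most N of the balls.\<close>

lemma sum_sum_cball_le:
  fixes g :: "'a \<Rightarrow> real"
  assumes d: "metric_on d" and balls: "\<And>x. finite (cball_d d x r) \<and> card (cball_d d x r) \<le> N"
    and "finite A" and g: "\<And>y. 0 \<le> g y"
  shows "(\<Sum>x\<in>A. \<Sum>y\<in>cball_d d x r. g y) \<le> real N * (\<Sum>y\<in>(\<Union>x\<in>A. cball_d d x r). g y)"
proof -
  define U where "U = (\<Union>x\<in>A. cball_d d x r)"
  have U: "finite U" using \<open>finite A\<close> balls by (simp add: U_def)
  have "(\<Sum>x\<in>A. \<Sum>y\<in>cball_d d x r. g y) = (\<Sum>x\<in>A. \<Sum>y\<in>U. if d x y \<le> r then g y else 0)"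
  proof (rule sum.cong[OF refl])
    fix x assume "x \<in> A"
    then have "cball_d d x r = {y\<in>U. d x y \<le> r}" by (auto simp: U_def cball_d_def)
    then show "(\<Sum>y\<in>cball_d d x r. g y) = (\<Sum>y\<in>U. if d x y \<le> r then g y else 0)"
      by (simp add: sum.inter_filter[OF U])
  qed
  also have "\<dots> = (\<Sum>y\<in>U. real (card {x\<in>A. d x y \<le> r}) * g y)"
    by (subst sum.swap) (simp add: sum.inter_filter[OF \<open>finite A\<close>, symmetric])
  also have "\<dots> \<le> (\<Sum>y\<in>U. real N * g y)"
  proof (rule sum_mono)
    fix y
    have "{x\<in>A. d x y \<le> r} \<subseteq> cball_d d y r"
      using d by (auto simp: cball_d_def metric_on_def)
    then have "card {x\<in>A. d x y \<le> r} \<le> N"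
      using card_mono balls[of y] by (meson le_trans)
    then show "real (card {x\<in>A. d x y \<le> r}) * g y \<le> real N * g y"
      using g by (intro mult_right_mono) auto
  qed
  finally show ?thesis by (simp add: U_def sum_distrib_left)
qed

lemma ell2_bounded_Op:
  fixes k :: "'a \<Rightarrow> 'a \<Rightarrow> complex"
  assumes d: "metric_on d" and balls: "\<And>x. finite (cball_d d x r) \<and> card (cball_d d x r) \<le> N"
    and controlled: "\<And>x y. d x y > r \<Longrightarrow> k x y = 0" and bounded: "\<And>x y. cmod (k x y) \<le> M"
  shows "ell2_bounded (Op k)"
proof (rule ell2_boundedI[where C="\<bar>M\<bar> * real N"])
  fix f :: "'a \<Rightarrow> complex" assume f: "f \<in> ell2"
  have pointwise: "(cmod (Op k f x))\<^sup>2 \<le> M\<^sup>2 * real N * (\<Sum>y\<in>cball_d d x r. (cmod (f y))\<^sup>2)" for x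
  proof -
    have "cmod (Op k f x) = cmod (\<Sum>y\<in>cball_d d x r. k x y * f y)"
      by (subst Op_eq_finite_sum) (use balls controlled in \<open>auto simp: cball_d_def\<close>)
    also have "\<dots> \<le> (\<Sum>y\<in>cball_d d x r. \<bar>M\<bar> * cmod (f y))"
    proof (rule sum_norm_le)
      fix y
      have "cmod (k x y) \<le> \<bar>M\<bar>" using bounded[of x y] abs_ge_self order_trans by blast
      then show "cmod (k x y * f y) \<le> \<bar>M\<bar> * cmod (f y)" by (simp add: norm_mult mult_right_mono)
    qed
    finally have "(cmod (Op k f x))\<^sup>2 \<le> (\<Sum>y\<in>cball_d d x r. 1 * (\<bar>M\<bar> * cmod (f y)))\<^sup>2"
      by (simp add: power_mono)
    also have "\<dots> \<le> (\<Sum>y\<in>cball_d d x r. 1\<^sup>2) * (\<Sum>y\<in>cball_d d x r. (\<bar>M\<bar> * cmod (f y))\<^sup>2)"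
      by (rule Cauchy_Schwarz_ineq_sum)
    also have "\<dots> = real (card (cball_d d x r)) * (M\<^sup>2 * (\<Sum>y\<in>cball_d d x r. (cmod (f y))\<^sup>2))"
      by (simp add: power_mult_distrib sum_distrib_left)
    also have "\<dots> \<le> real N * (M\<^sup>2 * (\<Sum>y\<in>cball_d d x r. (cmod (f y))\<^sup>2))"
      using balls[of x] by (intro mult_right_mono) (auto simp: sum_nonneg)
    finally show ?thesis by (simp add: algebra_simps)
  qed
  have "(\<Sum>x\<in>A. (cmod (Op k f x))\<^sup>2) \<le> (M * real N)\<^sup>2 * (norm2 f)\<^sup>2" if A: "finite A" for A
  proof -
    have "(\<Sum>x\<in>A. (cmod (Op k f x))\<^sup>2)
        \<le> (\<Sum>x\<in>A. M\<^sup>2 * real N * (\<Sum>y\<in>cball_d d x r. (cmod (f y))\<^sup>2))"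
      by (rule sum_mono[OF pointwise])
    also have "\<dots> = M\<^sup>2 * real N * (\<Sum>x\<in>A. \<Sum>y\<in>cball_d d x r. (cmod (f y))\<^sup>2)"
      by (simp add: sum_distrib_left)
    also have "\<dots> \<le> M\<^sup>2 * real N * (real N * (\<Sum>y\<in>(\<Union>x\<in>A. cball_d d x r). (cmod (f y))\<^sup>2))"
      by (intro mult_left_mono sum_sum_cball_le[OF d balls A]) auto
    also have "\<dots> \<le> M\<^sup>2 * real N * (real N * (norm2 f)\<^sup>2)"
      using balls A by (intro mult_left_mono sum_norm_sq_le_norm2_sq[OF f]) auto
    finally show ?thesis by (simp add: power2_eq_square algebra_simps)
  qed
  from ell2_if_finite_sums_le[OF this]
  show "Op k f \<in> ell2 \<and> norm2 (Op k f) \<le> \<bar>M\<bar> * real N * norm2 f"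
    using norm2_nonneg[of f] by (simp add: real_sqrt_mult abs_mult)
qed

lemma E_alg_approx:
  fixes T :: "('a \<Rightarrow> complex) \<Rightarrow> ('a \<Rightarrow> complex)"
  assumes d: "metric_on d" and bg: "bounded_geometry d" and "T \<in> E_alg d" and "e > 0"
  obtains k r where "r > 0" and "\<And>x y. d x y > r \<Longrightarrow> k x y = 0"
    and "ell2_bounded (\<lambda>f x. T f x - Op k f x)" and "opnorm (\<lambda>f x. T f x - Op k f x) < e"
proof -
  obtain k where "bounded_kernel k" "controlled_kernel d k" and close: "opnorm (\<lambda>f x. T f x - Op k f x) < e"
    using assms(3,4) unfolding E_alg_def by blast
  then obtain M r0 where M: "\<And>x y. cmod (k x y) \<le> M" and r0: "\<And>x y. d x y > r0 \<Longrightarrow> k x y = 0"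
    unfolding bounded_kernel_def controlled_kernel_def by blast
  define r where "r = max r0 1"
  have r: "r > 0" and controlled: "\<And>x y. d x y > r \<Longrightarrow> k x y = 0"
    using r0 by (auto simp: r_def)
  obtain N where balls: "\<And>x. finite (cball_d d x r) \<and> card (cball_d d x r) \<le> N"
    using bg r unfolding bounded_geometry_def by blast
  have "ell2_bounded (Op k)" by (rule ell2_bounded_Op[OF d balls controlled M])
  moreover have "ell2_bounded T"
    using assms(3) by (simp add: E_alg_def bounded_op_imp_ell2_bounded)
  ultimately show ?thesis
    using that[OF r controlled _ close] ell2_bounded_diff by blast
qed

section \<open>Matrix coefficients on balls\<close>

lemma finite_cball_d_bounded_geometry:
  assumes "bounded_geometry d" and "r > 0"
  shows "finite (cball_d d x r)"
  using assms unfolding bounded_geometry_def by blast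

lemma cball_d_center:
  assumes "metric_on d" and "0 \<le> r"
  shows "x \<in> cball_d d x r"
proof -
  have "d x x = 0" using assms(1) unfolding metric_on_def by blast
  then show ?thesis using assms(2) by (simp add: cball_d_def)
qed

definition cball_coeff_sup ::
    "(('a \<Rightarrow> complex) \<Rightarrow> ('a \<Rightarrow> complex)) \<Rightarrow> ('a \<Rightarrow> 'a \<Rightarrow> real) \<Rightarrow> 'a \<Rightarrow> real \<Rightarrow> real" where
  "cball_coeff_sup T d x r = (SUP p\<in>cball_d d x r \<times> cball_d d x r. cmod (coeff T (fst p) (snd p)))"

lemma coeff_le_cball_coeff_sup:
  assumes "finite (cball_d d x r)" and "y \<in> cball_d d x r" and "z \<in> cball_d d x r"
  shows "cmod (coeff T y z) \<le> cball_coeff_sup T d x r"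
  unfolding cball_coeff_sup_def
  by (rule cSUP_upper2[where x="(y, z)"]) (use assms in \<open>auto intro!: bdd_above_finite\<close>)

lemma cball_coeff_sup_nonneg:
  assumes "metric_on d" and "0 \<le> r" and "finite (cball_d d x r)"
  shows "0 \<le> cball_coeff_sup T d x r"
  using coeff_le_cball_coeff_sup[OF assms(3) cball_d_center[OF assms(1,2)] cball_d_center[OF assms(1,2)]]
  by (meson norm_ge_zero order_trans)

lemma cball_coeff_sup_le:
  assumes "metric_on d" and "0 \<le> r"
    and "\<And>y z. y \<in> cball_d d x r \<Longrightarrow> z \<in> cball_d d x r \<Longrightarrow> cmod (coeff T y z) \<le> c"
  shows "cball_coeff_sup T d x r \<le> c"
  unfolding cball_coeff_sup_def using assms cball_d_center[OF assms(1,2)] by (intro cSUP_least) auto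

lemma cball_coeff_sup_le_opnorm:
  assumes "metric_on d" and "ell2_bounded T" and "0 \<le> r"
  shows "cball_coeff_sup T d x r \<le> opnorm (mult_op (cball_d d x r) T)"
proof (rule cball_coeff_sup_le[OF assms(1,3)])
  fix y z assume "y \<in> cball_d d x r"
  then have "coeff T y z = mult_op (cball_d d x r) T (indicator {z}) y"
    by (simp add: mult_op_def coeff_def)
  also have "cmod \<dots> \<le> opnorm (mult_op (cball_d d x r) T)"
    by (rule norm_le_opnorm[OF ell2_bounded_mult_op[OF assms(2)] ell2_indicator_singleton])
      (simp add: norm2_indicator_singleton)
  finally show "cmod (coeff T y z) \<le> opnorm (mult_op (cball_d d x r) T)" .
qed

text \<open>Where Op k vanishes at x, T agrees at x with the small operator T - Op k.\<close>

lemma norm_apply_le_opnorm_diff_Op: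
  fixes d :: "'a \<Rightarrow> 'a \<Rightarrow> real"
  assumes "ell2_bounded (\<lambda>f x. T f x - Op k f x)"
    and "\<And>y. d x y > r \<Longrightarrow> k x y = 0" and "\<And>y. d x y \<le> r \<Longrightarrow> g y = 0"
    and "g \<in> ell2" and "norm2 g \<le> 1"
  shows "cmod (T g x) \<le> opnorm (\<lambda>f x. T f x - Op k f x)"
proof -
  have "k x y * g y = 0" for y
    using assms(2)[of y] assms(3)[of y] by (cases "d x y \<le> r") auto
  then have "Op k g x = (\<Sum>y\<in>{}. k x y * g y)"
    by (intro Op_eq_finite_sum) auto
  then have "Op k g x = 0" by simp
  then show ?thesis
    using norm_le_opnorm[OF assms(1,4,5), of x] by simp
qed

lemma norm_apply_le_cball_coeff_sup:
  fixes T :: "('a \<Rightarrow> complex) \<Rightarrow> ('a \<Rightarrow> complex)"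
  assumes d: "metric_on d" and bg: "bounded_geometry d" and T: "bounded_op T"
    and r0: "r0 > 0" and balls: "\<And>x. finite (cball_d d x r0) \<and> card (cball_d d x r0) \<le> N"
    and controlled: "\<And>x y. d x y > r0 \<Longrightarrow> k x y = 0"
    and diff: "ell2_bounded (\<lambda>f x. T f x - Op k f x)"
    and r: "0 \<le> r" and x: "x \<in> cball_d d x0 r" and f: "f \<in> ell2" "norm2 f \<le> 1"
  shows "cmod (T f x) \<le> opnorm (\<lambda>f x. T f x - Op k f x) + real N * cball_coeff_sup T d x0 (r + r0)"
proof -
  define B where "B = cball_d d x r0"
  define m where "m = cball_coeff_sup T d x0 (r + r0)"
  have B: "finite B" using balls by (simp add: B_def)
  have fin: "finite (cball_d d x0 (r + r0))"
    using bg r r0 by (intro finite_cball_d_bounded_geometry) auto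
  define near where "near = (\<lambda>z. \<Sum>y\<in>B. f y * indicator {y} z)"
  define far where "far = (\<lambda>z. indicator (- B) z * f z)"
  have near_eq: "near z = (if z \<in> B then f z else 0)" for z
    unfolding near_def by (rule sum_mult_indicator_singleton[OF B])
  have near: "near \<in> ell2" by (rule ell2_finite_support[OF B]) (simp add: near_eq)
  have far: "far \<in> ell2" "norm2 far \<le> 1"
    unfolding far_def using ell2_indicator_mult[OF f(1), of "- B"] f(2) by auto
  have "f = (\<lambda>z. near z + far z)" by (rule ext) (simp add: near_eq far_def indicator_def)
  then have split: "T f x = T near x + T far x" by (simp add: bounded_op_add[OF T near far(1)])
  have "cmod (T near x) \<le> (\<Sum>y\<in>B. cmod (f y * coeff T x y))"
    unfolding near_def bounded_op_sum_indicator[OF T B] by (rule norm_sum)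
  also have "\<dots> \<le> (\<Sum>y\<in>B. m)"
  proof (rule sum_mono)
    fix y assume "y \<in> B"
    have "d x0 x \<le> r" and "d x y \<le> r0"
      using x \<open>y \<in> B\<close> by (simp_all add: B_def cball_d_def)
    moreover have "d x0 y \<le> d x0 x + d x y" using d unfolding metric_on_def by blast
    ultimately have "y \<in> cball_d d x0 (r + r0)" and "x \<in> cball_d d x0 (r + r0)"
      using r0 by (simp_all add: cball_d_def)
    then have "cmod (coeff T x y) \<le> m" unfolding m_def by (intro coeff_le_cball_coeff_sup fin)
    moreover have "cmod (f y) \<le> 1" using norm_le_norm2[OF f(1), of y] f(2) by linarith
    ultimately show "cmod (f y * coeff T x y) \<le> m"
      using mult_mono[of "cmod (f y)" 1 "cmod (coeff T x y)" m] by (simp add: norm_mult)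
  qed
  also have "\<dots> \<le> real N * m"
    using balls[of x] cball_coeff_sup_nonneg[OF d _ fin, of T] r r0
    by (simp add: B_def m_def mult_right_mono)
  finally have "cmod (T near x) \<le> real N * m" .
  moreover have "far y = 0" if "d x y \<le> r0" for y
    using that by (simp add: far_def B_def cball_d_def)
  then have "cmod (T far x) \<le> opnorm (\<lambda>f x. T f x - Op k f x)"
    using norm_apply_le_opnorm_diff_Op[OF diff controlled _ far] by blast
  ultimately show ?thesis
    unfolding split m_def using norm_triangle_ineq[of "T near x" "T far x"] by linarith
qed

lemma opnorm_mult_op_cball_le:
  fixes T :: "('a \<Rightarrow> complex) \<Rightarrow> ('a \<Rightarrow> complex)"
  assumes d: "metric_on d" and bg: "bounded_geometry d" and T: "bounded_op T"
    and r0: "r0 > 0" and balls0: "\<And>x. finite (cball_d d x r0) \<and> card (cball_d d x r0) \<le> N0"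
    and controlled: "\<And>x y. d x y > r0 \<Longrightarrow> k x y = 0"
    and diff: "ell2_bounded (\<lambda>f x. T f x - Op k f x)"
    and r: "0 \<le> r" and ball: "finite (cball_d d x0 r)" "card (cball_d d x0 r) \<le> N"
  shows "opnorm (mult_op (cball_d d x0 r) T)
    \<le> sqrt (real N) * (opnorm (\<lambda>f x. T f x - Op k f x) + real N0 * cball_coeff_sup T d x0 (r + r0))"
proof (rule opnorm_le)
  define c where "c = opnorm (\<lambda>f x. T f x - Op k f x) + real N0 * cball_coeff_sup T d x0 (r + r0)"
  define B where "B = cball_d d x0 r"
  have "0 \<le> cball_coeff_sup T d x0 (r + r0)"
    using r r0 by (intro cball_coeff_sup_nonneg[OF d] finite_cball_d_bounded_geometry[OF bg]) auto
  then have c: "0 \<le> c"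
    unfolding c_def using opnorm_nonneg[OF diff] by simp
  fix f :: "'a \<Rightarrow> complex" assume f: "f \<in> ell2" "norm2 f \<le> 1"
  have "norm2 (mult_op B T f) = sqrt (\<Sum>x\<in>B. (cmod (mult_op B T f x))\<^sup>2)"
    by (rule ell2_finite_support(2)) (use ball in \<open>auto simp: B_def mult_op_def\<close>)
  also have "\<dots> \<le> sqrt (\<Sum>x\<in>B. c\<^sup>2)"
  proof (intro real_sqrt_le_mono sum_mono)
    fix x assume "x \<in> B"
    then have "cmod (mult_op B T f x) \<le> c"
      unfolding c_def B_def mult_op_def
      using norm_apply_le_cball_coeff_sup[OF d bg T r0 balls0 controlled diff r _ f] by simp
    then show "(cmod (mult_op B T f x))\<^sup>2 \<le> c\<^sup>2" by (simp add: power_mono)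
  qed
  also have "\<dots> = sqrt (real (card B)) * c" using c by (simp add: real_sqrt_mult)
  also have "\<dots> \<le> sqrt (real N) * c" using ball c by (intro mult_right_mono) (auto simp: B_def)
  finally show "norm2 (mult_op (cball_d d x0 r) T f)
      \<le> sqrt (real N) * (opnorm (\<lambda>f x. T f x - Op k f x) + real N0 * cball_coeff_sup T d x0 (r + r0))"
    by (simp add: B_def c_def)
qed

lemma tendsto_zero_if_eventually_le_approx:
  fixes f :: "'a \<Rightarrow> real"
  assumes "\<And>e. e > 0 \<Longrightarrow> \<exists>g. (g \<longlongrightarrow> 0) F \<and> eventually (\<lambda>x. \<bar>f x\<bar> \<le> e + g x) F"
  shows "(f \<longlongrightarrow> 0) F"
proof (rule tendstoI)
  fix \<epsilon> :: real assume "\<epsilon> > 0"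
  then obtain g where g: "(g \<longlongrightarrow> 0) F" and le: "eventually (\<lambda>x. \<bar>f x\<bar> \<le> \<epsilon> / 2 + g x) F"
    using assms[of "\<epsilon> / 2"] by auto
  have "eventually (\<lambda>x. \<bar>g x\<bar> < \<epsilon> / 2) F"
    using tendstoD[OF g, of "\<epsilon> / 2"] \<open>\<epsilon> > 0\<close> by simp
  with le show "eventually (\<lambda>x. dist (f x) 0 < \<epsilon>) F"
    by eventually_elim auto
qed

lemma G_alg_iff_cball_coeff_sup_tendsto:
  fixes T :: "('a \<Rightarrow> complex) \<Rightarrow> ('a \<Rightarrow> complex)"
  assumes d: "metric_on d" and bg: "bounded_geometry d" and TE: "T \<in> E_alg d"
  shows "T \<in> G_alg d \<xi> \<longleftrightarrow> (\<forall>r>0. ((\<lambda>x. cball_coeff_sup T d x r) \<longlongrightarrow> 0) \<xi>)"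
proof
  have T: "bounded_op T" using TE by (simp add: E_alg_def)
  assume G: "T \<in> G_alg d \<xi>"
  show "\<forall>r>0. ((\<lambda>x. cball_coeff_sup T d x r) \<longlongrightarrow> 0) \<xi>"
  proof (intro allI impI)
    fix r :: real assume "r > 0"
    have le: "cball_coeff_sup T d x r \<le> opnorm (mult_op (cball_d d x r) T)" for x
      using \<open>r > 0\<close> by (intro cball_coeff_sup_le_opnorm[OF d bounded_op_imp_ell2_bounded[OF T]]) simp
    have nonneg: "0 \<le> cball_coeff_sup T d x r" for x
      using \<open>r > 0\<close> by (intro cball_coeff_sup_nonneg[OF d] finite_cball_d_bounded_geometry[OF bg]) auto
    have lim: "((\<lambda>x. opnorm (mult_op (cball_d d x r) T)) \<longlongrightarrow> 0) \<xi>"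
      using G \<open>r > 0\<close> by (simp add: G_alg_def)
    show "((\<lambda>x. cball_coeff_sup T d x r) \<longlongrightarrow> 0) \<xi>"
      by (rule tendsto_sandwich[where f="\<lambda>x. 0", OF _ _ tendsto_const lim]) (simp_all add: le nonneg)
  qed
next
  assume lim: "\<forall>r>0. ((\<lambda>x. cball_coeff_sup T d x r) \<longlongrightarrow> 0) \<xi>"
  have T: "bounded_op T" using TE by (simp add: E_alg_def)
  have "((\<lambda>x. opnorm (mult_op (cball_d d x r) T)) \<longlongrightarrow> 0) \<xi>" if r: "r > 0" for r
  proof (rule tendsto_zero_if_eventually_le_approx)
    obtain N where balls: "\<And>x. finite (cball_d d x r) \<and> card (cball_d d x r) \<le> N"
      using bg r unfolding bounded_geometry_def by blast
    fix e :: real assume "e > 0"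
    then have pos: "e / (sqrt (real N) + 1) > 0" by (simp add: add_nonneg_pos)
    obtain k r0 where r0: "r0 > 0" and controlled: "\<And>x y. d x y > r0 \<Longrightarrow> k x y = 0"
      and diff: "ell2_bounded (\<lambda>f x. T f x - Op k f x)"
      and close: "opnorm (\<lambda>f x. T f x - Op k f x) < e / (sqrt (real N) + 1)"
      by (rule E_alg_approx[OF d bg TE pos]) blast
    obtain N0 where balls0: "\<And>x. finite (cball_d d x r0) \<and> card (cball_d d x r0) \<le> N0"
      using bg r0 unfolding bounded_geometry_def by blast
    define g where "g x = sqrt (real N) * (real N0 * cball_coeff_sup T d x (r + r0))" for x
    have "((\<lambda>x. cball_coeff_sup T d x (r + r0)) \<longlongrightarrow> 0) \<xi>"
      using lim r r0 by simp
    then have "(g \<longlongrightarrow> 0) \<xi>"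
      unfolding g_def by (intro tendsto_mult_right_zero)
    moreover have "\<bar>opnorm (mult_op (cball_d d x r) T)\<bar> \<le> e + g x" for x
    proof -
      have "sqrt (real N) * opnorm (\<lambda>f x. T f x - Op k f x) \<le> sqrt (real N) * (e / (sqrt (real N) + 1))"
        using close by (intro mult_left_mono) auto
      also have "\<dots> = e * (sqrt (real N) / (sqrt (real N) + 1))" by simp
      also have "\<dots> \<le> e"
        using \<open>e > 0\<close> by (intro mult_left_le) (auto simp: divide_le_eq add_nonneg_pos)
      finally have small: "sqrt (real N) * opnorm (\<lambda>f x. T f x - Op k f x) \<le> e" .
      have "opnorm (mult_op (cball_d d x r) T)
          \<le> sqrt (real N) * (opnorm (\<lambda>f x. T f x - Op k f x) + real N0 * cball_coeff_sup T d x (r + r0))"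
        using r balls[of x] by (intro opnorm_mult_op_cball_le[OF d bg T r0 balls0 controlled diff]) auto
      also have "\<dots> \<le> e + g x"
        using small by (simp add: g_def distrib_left)
      finally show ?thesis
        using opnorm_nonneg[OF ell2_bounded_mult_op[OF bounded_op_imp_ell2_bounded[OF T]]] by simp
    qed
    ultimately show "\<exists>g. (g \<longlongrightarrow> 0) \<xi> \<and> eventually (\<lambda>x. \<bar>opnorm (mult_op (cball_d d x r) T)\<bar> \<le> e + g x) \<xi>"
      by (blast intro: always_eventually)
  qed
  then show "T \<in> G_alg d \<xi>" using TE by (simp add: G_alg_def)
qed

lemma G_alg_imp_lim2_zero:
  fixes S :: "('a \<Rightarrow> complex) \<Rightarrow> ('a \<Rightarrow> complex)"
  assumes d: "metric_on d" and bg: "bounded_geometry d" and SG: "S \<in> G_alg d \<xi>"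
  shows "lim2_zero \<xi> (coeff S)"
  unfolding lim2_zero_def
proof (intro allI impI)
  fix e :: real assume "e > 0"
  have SE: "S \<in> E_alg d" using SG by (simp add: G_alg_def)
  obtain k r0 where r0: "r0 > 0" and controlled: "\<And>x y. d x y > r0 \<Longrightarrow> k x y = 0"
    and diff: "ell2_bounded (\<lambda>f x. S f x - Op k f x)" and close: "opnorm (\<lambda>f x. S f x - Op k f x) < e"
    by (rule E_alg_approx[OF d bg SE \<open>e > 0\<close>]) blast
  define F where "F = {x. cball_coeff_sup S d x r0 < e}"
  have "((\<lambda>x. cball_coeff_sup S d x r0) \<longlongrightarrow> 0) \<xi>"
    using G_alg_iff_cball_coeff_sup_tendsto[OF d bg SE] SG r0 by blast
  from tendstoD[OF this \<open>e > 0\<close>] have "eventually (\<lambda>x. x \<in> F) \<xi>"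
    by eventually_elim (simp add: F_def)
  moreover have "cmod (coeff S x y) < e" if "x \<in> F" "y \<in> F" for x y
  proof (cases "d x y \<le> r0")
    case True
    have "x \<in> cball_d d x r0" using d r0 by (intro cball_d_center) auto
    moreover have "y \<in> cball_d d x r0" using True by (simp add: cball_d_def)
    ultimately have "cmod (coeff S x y) \<le> cball_coeff_sup S d x r0"
      using r0 by (intro coeff_le_cball_coeff_sup finite_cball_d_bounded_geometry[OF bg])
    then show ?thesis using \<open>x \<in> F\<close> by (simp add: F_def)
  next
    case False
    have "cmod (coeff S x y) \<le> opnorm (\<lambda>f x. S f x - Op k f x)"
      unfolding coeff_def using False
      by (intro norm_apply_le_opnorm_diff_Op[OF diff controlled _ ell2_indicator_singleton])
        (auto simp: norm2_indicator_singleton indicator_def)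
    then show ?thesis using close by simp
  qed
  ultimately show "\<exists>F. eventually (\<lambda>x. x \<in> F) \<xi> \<and> (\<forall>x\<in>F. \<forall>y\<in>F. cmod (coeff S x y) < e)"
    by blast
qed

lemma lim2_zero_imp_cball_coeff_sup_tendsto:
  assumes d: "metric_on d" and bg: "bounded_geometry d" and coarse: "coarse_filter d \<xi>"
    and lim: "lim2_zero \<xi> (coeff S)" and r: "r > 0"
  shows "((\<lambda>x. cball_coeff_sup S d x r) \<longlongrightarrow> 0) \<xi>"
proof (rule tendstoI)
  fix \<epsilon> :: real assume "\<epsilon> > 0"
  then obtain F where F: "eventually (\<lambda>x. x \<in> F) \<xi>"
    and small: "\<And>x y. x \<in> F \<Longrightarrow> y \<in> F \<Longrightarrow> cmod (coeff S x y) < \<epsilon> / 2"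
    using lim unfolding lim2_zero_def by (meson half_gt_zero)
  have "eventually (\<lambda>x. x \<in> interior_r d F r) \<xi>"
    using coarse F r unfolding coarse_filter_def by blast
  then show "eventually (\<lambda>x. dist (cball_coeff_sup S d x r) 0 < \<epsilon>) \<xi>"
  proof eventually_elim
    case (elim x)
    then have "cball_d d x r \<subseteq> F"
      unfolding interior_r_def cball_d_def by (force simp: not_less[symmetric])
    then have "cmod (coeff S y z) \<le> \<epsilon> / 2" if "y \<in> cball_d d x r" "z \<in> cball_d d x r" for y z
      using small that by (meson less_imp_le subsetD)
    then have "cball_coeff_sup S d x r \<le> \<epsilon> / 2"
      using r by (intro cball_coeff_sup_le[OF d]) auto
    moreover have "0 \<le> cball_coeff_sup S d x r"
      using r by (intro cball_coeff_sup_nonneg[OF d] finite_cball_d_bounded_geometry[OF bg]) auto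
    ultimately show ?case using \<open>\<epsilon> > 0\<close> by simp
  qed
qed

theorem proposition5p10:
  fixes d :: "'a \<Rightarrow> 'a \<Rightarrow> real" and \<xi> :: "'a filter"
    and T :: "('a \<Rightarrow> complex) \<Rightarrow> ('a \<Rightarrow> complex)"
  assumes "infinite (UNIV :: 'a set)" and "metric_on d" and "discrete_metric d"
    and "bounded_geometry d" and "T \<in> E_alg d"
  shows "(T \<in> G_alg d \<xi> \<longleftrightarrow>
      (\<forall>r>0. ((\<lambda>x. SUP p\<in>cball_d d x r \<times> cball_d d x r. cmod (coeff T (fst p) (snd p))) \<longlongrightarrow> 0) \<xi>))
    \<and> (coarse_filter d \<xi> \<longrightarrow> G_alg d \<xi> = {S \<in> E_alg d. lim2_zero \<xi> (coeff S)})"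
proof (intro conjI impI)
  note d = assms(2) and bg = assms(4)
  show "T \<in> G_alg d \<xi> \<longleftrightarrow>
      (\<forall>r>0. ((\<lambda>x. SUP p\<in>cball_d d x r \<times> cball_d d x r. cmod (coeff T (fst p) (snd p))) \<longlongrightarrow> 0) \<xi>)"
    using G_alg_iff_cball_coeff_sup_tendsto[OF d bg assms(5)] by (simp add: cball_coeff_sup_def)
  assume "coarse_filter d \<xi>"
  show "G_alg d \<xi> = {S \<in> E_alg d. lim2_zero \<xi> (coeff S)}"
  proof (intro set_eqI iffI)
    fix S assume "S \<in> G_alg d \<xi>"
    then show "S \<in> {S \<in> E_alg d. lim2_zero \<xi> (coeff S)}"
      using G_alg_imp_lim2_zero[OF d bg] by (simp add: G_alg_def)
  next
    fix S assume "S \<in> {S \<in> E_alg d. lim2_zero \<xi> (coeff S)}"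
    then show "S \<in> G_alg d \<xi>"
      using G_alg_iff_cball_coeff_sup_tendsto[OF d bg]
        lim2_zero_imp_cball_coeff_sup_tendsto[OF d bg \<open>coarse_filter d \<xi>\<close>] by blast
  qed
qed

end
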